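(* Let $\lambda\in(0,1)$ and consider the gauge action as an action of $\mathbb R$ on $\mathcal Q^\lambda$ by $t\mapsto\gamma_{e^{it}}$. The dense $*$-subalgebra of finite linear combinations of elements $\chi_{[a,b)}\delta_g\in\mathcal Q^\lambda$ consists of entire analytic elements for this action, and $\psi$ is a $\mathrm{KMS}_\beta$ state for this action with $\beta=\log(\lambda^{-1})$, i.e. $\psi(x\,\gamma_{i\beta}(y))=\psi(yx)$ for all $x,y$ in that subalgebra. Moreover $\psi$ is the unique KMS state for this action, for any value of $\beta$.
   Context: Fix $\lambda\in(0,1)$ and $\Gamma_\lambda=\{\sum_{k=-N}^{N}n_k\lambda^k:N\ge0,n_k\in\mathbb Z\}\subset\mathbb R$. Let $G_\lambda$ be the group of matrices $[\lambda^n:a]=\begin{pmatrix}\lambda^n&a\\0&1\end{pmatrix}$ ($n\in\mathbb Z$, $a\in\Gamma_\lambda$) acting on $\mathbb R$ by $t\mapsto\lambda^nt+a$; $|g|=\det g$. $C_0^\lambda(\mathbb R)$ is the norm-closed subalgebra of $L^\infty(\mathbb R)$ generated by $\chi_{[a,b)}$, $a<b\in\Gamma_\lambda$, with action $\alpha_g(f)(t)=f(g^{-1}t)$. $A^\lambda=C_0^\lambda(\mathbb R)\rtimes_\alpha G_\lambda$; $f\delta_g$ is the element supported at $g$ with value $f$. With $e=\chi_{[0,1)}\delta_1$, $\mathcal Q^\lambda=eA^\lambda e$. The gauge action $\gamma$ of the circle $\mathbb T$ on $A^\lambda$ (the dual action for $A^\lambda=\mathbb Z\ltimes A_0^\lambda$)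 is determined by $\gamma_z(f\delta_g)=z^nf\delta_g$ when $|g|=\lambda^n$; it restricts to $\mathcal Q^\lambda$. Let $E:A^\lambda\to C_0^\lambda(\mathbb R)$ be the faithful conditional expectation extending $x\mapsto x(1)$, and $\psi(x)=\int_{\mathbb R}E(x)(t)\,dt$ for $x\in\mathcal Q^\lambda$; $\psi$ is a faithful state on $\mathcal Q^\lambda$. *)

theory Defs
  imports "HOL-Analysis.Analysis"
begin

definition Gam :: "real \<Rightarrow> real set" where
  "Gam lam = {x. \<exists>(N::nat) (c::int \<Rightarrow> int).
      x = (\<Sum>k\<in>{-int N..int N}. of_int (c k) * lam powi k)}"

text \<open>Group G_lambda: the pair (n,a) stands for the matrix [lambda^n : a].\<close>
type_synonym grp = "int \<times> real"

definition Gcarrier :: "real \<Rightarrow> grp set" where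
  "Gcarrier lam = {g. snd g \<in> Gam lam}"

definition gmul :: "real \<Rightarrow> grp \<Rightarrow> grp \<Rightarrow> grp" where
  "gmul lam g h = (fst g + fst h, lam powi (fst g) * snd h + snd g)"

definition ginv :: "real \<Rightarrow> grp \<Rightarrow> grp" where
  "ginv lam g = (- fst g, - (lam powi (- fst g)) * snd g)"

definition gunit :: grp where "gunit = (0, 0)"

definition gact :: "real \<Rightarrow> grp \<Rightarrow> real \<Rightarrow> real" where
  "gact lam g t = lam powi (fst g) * t + snd g"

definition alpha :: "real \<Rightarrow> grp \<Rightarrow> (real \<Rightarrow> complex) \<Rightarrow> (real \<Rightarrow> complex)" where
  "alpha lam g f = (\<lambda>t. f (gact lam (ginv lam g) t))"

text \<open>Finite linear combinations of chi_[a,b), a<b in Gamma_lambda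
  (a dense *-subalgebra of C_0^lambda(R)).\<close>
definition stepfun :: "real \<Rightarrow> (real \<Rightarrow> complex) \<Rightarrow> bool" where
  "stepfun lam f \<longleftrightarrow> (\<exists>S c. finite S \<and> S \<subseteq> {(a,b). a \<in> Gam lam \<and> b \<in> Gam lam \<and> a < b} \<and>
      f = (\<lambda>t. \<Sum>(a,b)\<in>S. c (a,b) * indicator {a..<b} t))"

text \<open>Elements of the algebraic crossed product: finitely supported functions
  G_lambda -> step functions; x g is the coefficient of delta_g.\<close>
type_synonym elem = "grp \<Rightarrow> real \<Rightarrow> complex"

definition alg :: "real \<Rightarrow> elem \<Rightarrow> bool" where
  "alg lam x \<longleftrightarrow> finite {g. x g \<noteq> (\<lambda>_. 0)} \<and> {g. x g \<noteq> (\<lambda>_. 0)} \<subseteq> Gcarrier lam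
      \<and> (\<forall>g. stepfun lam (x g))"

text \<open>Product: (f delta_g)(h delta_k) = f alpha_g(h) delta_{gk}.\<close>
definition conv :: "real \<Rightarrow> elem \<Rightarrow> elem \<Rightarrow> elem" where
  "conv lam x y = (\<lambda>g t. \<Sum>h\<in>{h. x h \<noteq> (\<lambda>_. 0)}.
      x h t * alpha lam h (y (gmul lam (ginv lam h) g)) t)"

text \<open>Involution: (f delta_g)^* = alpha_{g^{-1}}(conj f) delta_{g^{-1}}.\<close>
definition star :: "real \<Rightarrow> elem \<Rightarrow> elem" where
  "star lam x = (\<lambda>g. alpha lam g (\<lambda>t. cnj (x (ginv lam g) t)))"

definition addE :: "elem \<Rightarrow> elem \<Rightarrow> elem" where
  "addE x y = (\<lambda>g t. x g t + y g t)"

definition scaleE :: "complex \<Rightarrow> elem \<Rightarrow> elem" where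
  "scaleE c x = (\<lambda>g t. c * x g t)"

definition eproj :: elem where
  "eproj = (\<lambda>g t. if g = gunit then indicator {0..<1} t else 0)"

text \<open>Q_alg: the dense *-subalgebra of Q^lambda = e A^lambda e spanned by the
  elements chi_[a,b) delta_g lying in Q^lambda.\<close>
definition Qalg :: "real \<Rightarrow> elem \<Rightarrow> bool" where
  "Qalg lam x \<longleftrightarrow> alg lam x \<and> conv lam eproj (conv lam x eproj) = x"

definition gauge :: "complex \<Rightarrow> elem \<Rightarrow> elem" where
  "gauge z x = (\<lambda>g t. z powi (fst g) * x g t)"

text \<open>Analytic extension of t |-> gamma_{e^{it}} to complex t.\<close>
definition gauge_ext :: "complex \<Rightarrow> elem \<Rightarrow> elem" where
  "gauge_ext z x = (\<lambda>g t. exp (\<i> * of_int (fst g) * z) * x g t)"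

definition psi :: "elem \<Rightarrow> complex" where
  "psi x = integral UNIV (x gunit)"

text \<open>States of Q^lambda, identified with normalized positive linear functionals
  on the dense *-subalgebra Qalg.\<close>
definition is_state :: "real \<Rightarrow> (elem \<Rightarrow> complex) \<Rightarrow> bool" where
  "is_state lam \<phi> \<longleftrightarrow>
     (\<forall>x y. Qalg lam x \<longrightarrow> Qalg lam y \<longrightarrow> \<phi> (addE x y) = \<phi> x + \<phi> y)
   \<and> (\<forall>c x. Qalg lam x \<longrightarrow> \<phi> (scaleE c x) = c * \<phi> x)
   \<and> (\<forall>x. Qalg lam x \<longrightarrow> Im (\<phi> (conv lam (star lam x) x)) = 0
                        \<and> Re (\<phi> (conv lam (star lam x) x)) \<ge> 0)
   \<and> \<phi> eproj = 1"

text \<open>KMS_beta condition checked on the analytic elements of Qalg.\<close>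
definition is_KMS :: "real \<Rightarrow> real \<Rightarrow> (elem \<Rightarrow> complex) \<Rightarrow> bool" where
  "is_KMS lam \<beta> \<phi> \<longleftrightarrow> is_state lam \<phi> \<and>
     (\<forall>x y. Qalg lam x \<longrightarrow> Qalg lam y \<longrightarrow>
        \<phi> (conv lam x (gauge_ext (\<i> * of_real \<beta>) y)) = \<phi> (conv lam y x))"

end

theory Submission
  imports Defs
begin

(* On a generator f\<delta>_g with |g| = \<lambda>^n the gauge action is multiplication by e^{i n t}, which
  extends to an entire function of t. The state \<psi> is KMS_\<beta> for \<beta> = log \<lambda>\<inverse>: evaluated at the
  unit, the integrands of x \<gamma>_{i\<beta>}(y) and yx differ by the substitution t \<mapsto> g t, whose
  Jacobian \<lambda>^n is exactly the factor e^{-n\<beta>} produced by \<gamma>_{i\<beta>}.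

  Conversely let \<phi> be a KMS_\<beta> state. On the diagonal, \<mu>(c,d) = \<phi>(\<chi>_[c,d)\<delta>_1) is positive,
  finitely additive and translation invariant, and the KMS condition for the dilation [\<lambda>^k : 0]
  gives e^{k\<beta>} \<mu>(0,\<lambda>^k) = 1. Counting copies of [0,\<lambda>^k) in [0,1) yields
  1 - \<lambda>^k \<le> (e^\<beta> \<lambda>)^k \<le> 1 + \<lambda>^k for all k, hence e^\<beta> \<lambda> = 1, and the same count then shows
  that \<mu> is Lebesgue measure. Off the diagonal, the KMS condition for \<chi>_[c,d)\<delta>_g against a
  cut-off \<chi>_[k1,k2)\<delta>_1 in [0,1) shows that \<phi>(\<chi>_[c,d)\<delta>_g) is fixed by the factor e^{-n\<beta>} \<noteq> 1
  when n \<noteq> 0; for a translation g = [1 : a] it shows that an endpoint can be moved by a, and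
  iterating empties the interval. Since these generators span Q_alg, \<phi> = \<psi>. *)

section \<open>Two Archimedean arguments\<close>

lemma shift_invariant_vanishes:
  fixes f :: "real \<Rightarrow> 'a::zero"
  assumes "0 < a" "c \<in> A" "\<And>x. x \<in> A \<Longrightarrow> x + a \<in> A"
    and shift: "\<And>x. x \<in> A \<Longrightarrow> c \<le> x \<Longrightarrow> f (x + a) = f x"
    and vanish: "\<And>x. d \<le> x \<Longrightarrow> f x = 0"
  shows "f c = 0"
proof -
  have iter: "c + real j * a \<in> A \<and> f (c + real j * a) = f c" for j :: nat
  proof (induction j)
    case (Suc j)
    let ?x = "c + real j * a"
    have "?x \<in> A" "f ?x = f c" "c \<le> ?x" using Suc.IH assms(1) by auto
    then have "?x + a \<in> A" "f (?x + a) = f c" using assms(3) shift by auto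
    moreover have "c + real (Suc j) * a = ?x + a" by (simp add: algebra_simps)
    ultimately show ?case by metis
  qed (use assms(2) in simp)
  obtain j :: nat where "(d - c) / a < real j" using reals_Archimedean2 by blast
  then have "d \<le> c + real j * a" using assms(1) by (simp add: field_simps)
  then show ?thesis using iter[of j] vanish by simp
qed

lemma power_bounds_imp_eq_1:
  fixes q r :: real
  assumes "0 \<le> q" "0 \<le> r" "r < 1" and bounds: "\<And>k. 1 - r ^ k \<le> q ^ k \<and> q ^ k \<le> 1 + r ^ k"
  shows "q = 1"
proof (rule ccontr)
  assume "q \<noteq> 1"
  then consider "1 < q" | "q < 1" by linarith
  then show False
  proof cases
    case 1
    obtain n where "2 < q ^ n" using real_arch_pow[OF 1] by blast
    moreover have "r ^ n \<le> 1" using assms by (simp add: power_le_one)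
    ultimately show False using bounds[of n] by simp
  next
    case 2
    define s where "s = max q r"
    have "s < 1" unfolding s_def using 2 assms by simp
    then obtain n where n: "s ^ n < 1 / 2" using real_arch_pow_inv[of "1/2" s] by auto
    have "q ^ n \<le> s ^ n" "r ^ n \<le> s ^ n" unfolding s_def using assms by (auto intro: power_mono)
    then show False using bounds[of n] n by simp
  qed
qed

section \<open>Laurent polynomials in \<lambda>\<close>

lemma Gam_iff_finite_sum:
  "x \<in> Gam lam \<longleftrightarrow> (\<exists>F c. finite F \<and> x = (\<Sum>k\<in>F. of_int (c k) * lam powi k))"
proof
  assume "x \<in> Gam lam"
  then show "\<exists>F c. finite F \<and> x = (\<Sum>k\<in>F. of_int (c k) * lam powi k)"
    unfolding Gam_def by blast
next
  assume "\<exists>F c. finite F \<and> x = (\<Sum>k\<in>F. of_int (c k) * lam powi k)"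
  then obtain F c where F: "finite F" and x: "x = (\<Sum>k\<in>F. of_int (c k) * lam powi k)"
    by blast
  define N where "N = nat (Max (insert 0 (abs ` F)))"
  have sub: "F \<subseteq> {-int N..int N}"
  proof
    fix k assume "k \<in> F"
    then have "\<bar>k\<bar> \<le> Max (insert 0 (abs ` F))" "0 \<le> Max (insert 0 (abs ` F))"
      using F by (auto intro: Max_ge)
    then show "k \<in> {-int N..int N}" unfolding N_def by auto
  qed
  have "x = (\<Sum>k\<in>{-int N..int N}. of_int (if k \<in> F then c k else 0) * lam powi k)"
    unfolding x using sub by (intro sum.mono_neutral_cong_left) auto
  then show "x \<in> Gam lam" unfolding Gam_def by (intro CollectI exI)
qed

lemma GamI: "finite F \<Longrightarrow> x = (\<Sum>k\<in>F. of_int (c k) * lam powi k) \<Longrightarrow> x \<in> Gam lam"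
  using Gam_iff_finite_sum by blast

lemma Gam_0: "0 \<in> Gam lam"
  by (rule GamI[of "{}"]) simp_all

lemma Gam_1: "1 \<in> Gam lam"
  by (rule GamI[of "{0}" _ "\<lambda>_. 1"]) simp_all

lemma Gam_add:
  assumes "x \<in> Gam lam" "y \<in> Gam lam"
  shows "x + y \<in> Gam lam"
proof -
  obtain F1 c1 where F1: "finite F1" "x = (\<Sum>k\<in>F1. of_int (c1 k) * lam powi k)"
    using assms(1) Gam_iff_finite_sum by blast
  obtain F2 c2 where F2: "finite F2" "y = (\<Sum>k\<in>F2. of_int (c2 k) * lam powi k)"
    using assms(2) Gam_iff_finite_sum by blast
  define c where "c k = (if k \<in> F1 then c1 k else 0) + (if k \<in> F2 then c2 k else 0)" for k
  have "x = (\<Sum>k\<in>F1 \<union> F2. of_int (if k \<in> F1 then c1 k else 0) * lam powi k)"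
    "y = (\<Sum>k\<in>F1 \<union> F2. of_int (if k \<in> F2 then c2 k else 0) * lam powi k)"
    unfolding F1(2) F2(2) using F1(1) F2(1) by (auto intro: sum.mono_neutral_cong_left)
  then have "x + y = (\<Sum>k\<in>F1 \<union> F2. of_int (c k) * lam powi k)"
    unfolding c_def by (simp add: sum.distrib[symmetric] distrib_right)
  then show ?thesis using F1(1) F2(1) by (intro GamI) auto
qed

lemma Gam_mult_int:
  assumes "x \<in> Gam lam"
  shows "of_int m * x \<in> Gam lam"
proof -
  obtain F c where F: "finite F" "x = (\<Sum>k\<in>F. of_int (c k) * lam powi k)"
    using assms Gam_iff_finite_sum by blast
  have "of_int m * x = (\<Sum>k\<in>F. of_int (m * c k) * lam powi k)"
    using F by (simp add: sum_distrib_left mult.assoc)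
  then show ?thesis by (rule GamI[OF F(1)])
qed

lemma Gam_mult_nat: "x \<in> Gam lam \<Longrightarrow> of_nat m * x \<in> Gam lam"
  using Gam_mult_int[of x lam "int m"] by simp

lemma Gam_uminus: "x \<in> Gam lam \<Longrightarrow> - x \<in> Gam lam"
  using Gam_mult_int[of x lam "-1"] by simp

lemma Gam_diff: "x \<in> Gam lam \<Longrightarrow> y \<in> Gam lam \<Longrightarrow> x - y \<in> Gam lam"
  using Gam_add[of x lam "-y"] Gam_uminus[of y lam] by simp

lemma Gam_mult_powi:
  assumes "x \<in> Gam lam" "lam \<noteq> 0"
  shows "lam powi j * x \<in> Gam lam"
proof -
  obtain F c where F: "finite F" "x = (\<Sum>k\<in>F. of_int (c k) * lam powi k)"
    using assms Gam_iff_finite_sum by blast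
  have "lam powi j * x = (\<Sum>k\<in>F. of_int (c k) * lam powi (k + j))"
    using F assms(2) by (simp add: sum_distrib_left power_int_add mult_ac)
  also have "\<dots> = (\<Sum>k\<in>(\<lambda>k. k + j) ` F. of_int (c (k - j)) * lam powi k)"
    by (subst sum.reindex) (auto simp: inj_on_def)
  finally show ?thesis using F(1) by (intro GamI) auto
qed

lemma Gam_powi: "lam \<noteq> 0 \<Longrightarrow> lam powi j \<in> Gam lam"
  using Gam_mult_powi[OF Gam_1] by fastforce

lemma Gam_max: "a \<in> Gam lam \<Longrightarrow> b \<in> Gam lam \<Longrightarrow> max a b \<in> Gam lam"
  by (simp add: max_def)

lemma Gam_min: "a \<in> Gam lam \<Longrightarrow> b \<in> Gam lam \<Longrightarrow> min a b \<in> Gam lam"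
  by (simp add: min_def)

section \<open>The affine group and its action on the line\<close>

lemma gact_ginv_gact [simp]: "lam \<noteq> 0 \<Longrightarrow> gact lam (ginv lam g) (gact lam g t) = t"
  unfolding gact_def ginv_def by (simp add: algebra_simps power_int_minus)

lemma gact_gact_ginv [simp]: "lam \<noteq> 0 \<Longrightarrow> gact lam g (gact lam (ginv lam g) t) = t"
  unfolding gact_def ginv_def by (simp add: algebra_simps power_int_minus)

lemma ginv_ginv [simp]: "lam \<noteq> 0 \<Longrightarrow> ginv lam (ginv lam g) = g"
  unfolding ginv_def by (cases g) (simp add: power_int_minus)

lemma gmul_ginv_gmul [simp]: "lam \<noteq> 0 \<Longrightarrow> gmul lam (ginv lam g) (gmul lam g h) = h"
  unfolding ginv_def gmul_def by (cases g, cases h) (simp add: algebra_simps power_int_minus)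

lemma gmul_gmul_ginv [simp]: "lam \<noteq> 0 \<Longrightarrow> gmul lam g (gmul lam (ginv lam g) h) = h"
  unfolding ginv_def gmul_def by (cases g, cases h) (simp add: algebra_simps power_int_minus)

lemma gmul_gunit_left [simp]: "gmul lam gunit g = g"
  unfolding gmul_def gunit_def by simp

lemma gmul_gunit_right [simp]: "gmul lam g gunit = g"
  unfolding gmul_def gunit_def by simp

lemma gmul_ginv_right [simp]: "lam \<noteq> 0 \<Longrightarrow> gmul lam g (ginv lam g) = gunit"
  using gmul_gmul_ginv[of lam g gunit] by simp

lemma gmul_ginv_left [simp]: "lam \<noteq> 0 \<Longrightarrow> gmul lam (ginv lam g) g = gunit"
  using gmul_ginv_gmul[of lam g gunit] by simp

lemma ginv_gunit [simp]: "ginv lam gunit = gunit"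
  unfolding ginv_def gunit_def by simp

lemma gact_gunit [simp]: "gact lam gunit t = t"
  unfolding gact_def gunit_def by simp

lemma fst_ginv [simp]: "fst (ginv lam g) = - fst g"
  unfolding ginv_def by simp

lemma inj_on_ginv: "lam \<noteq> 0 \<Longrightarrow> inj_on (ginv lam) A"
  by (rule inj_on_inverseI[where g = "ginv lam"]) simp

lemma ginv_Gcarrier: "lam \<noteq> 0 \<Longrightarrow> g \<in> Gcarrier lam \<Longrightarrow> ginv lam g \<in> Gcarrier lam"
  unfolding Gcarrier_def ginv_def by (simp add: Gam_mult_powi Gam_uminus)

lemma gact_Gam: "lam \<noteq> 0 \<Longrightarrow> g \<in> Gcarrier lam \<Longrightarrow> t \<in> Gam lam \<Longrightarrow> gact lam g t \<in> Gam lam"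
  unfolding Gcarrier_def gact_def by (simp add: Gam_add Gam_mult_powi)

lemma gact_le_iff [simp]: "0 < lam \<Longrightarrow> gact lam g s \<le> gact lam g t \<longleftrightarrow> s \<le> t"
  unfolding gact_def by simp

lemma gact_less_iff [simp]: "0 < lam \<Longrightarrow> gact lam g s < gact lam g t \<longleftrightarrow> s < t"
  unfolding gact_def by simp

lemma gact_ginv_eq: "0 < lam \<Longrightarrow> gact lam (ginv lam g) t = (t - snd g) / lam powi (fst g)"
  unfolding gact_def ginv_def by (simp add: power_int_minus field_simps)

lemma gact_ginv_translation: "gact lam (ginv lam (0, a)) t = t - a"
  unfolding gact_def ginv_def by simp

lemma gact_ginv_in_unit_interval_iff:
  assumes "0 < lam"
  shows "gact lam (ginv lam g) t \<in> {0..<1} \<longleftrightarrow> snd g \<le> t \<and> t < lam powi fst g + snd g"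
  using assms by (simp add: gact_ginv_eq field_simps)

lemma indicator_Ico_gact:
  assumes "0 < lam"
  shows "(indicator {c..<d} (gact lam g t) :: complex)
       = indicator {gact lam (ginv lam g) c..<gact lam (ginv lam g) d} t"
proof -
  have "gact lam g t \<in> {c..<d} \<longleftrightarrow> t \<in> {gact lam (ginv lam g) c..<gact lam (ginv lam g) d}"
    using assms gact_le_iff[OF assms, of "ginv lam g"] gact_less_iff[OF assms, of "ginv lam g"]
    by (metis atLeastLessThan_iff gact_ginv_gact less_numeral_extra(3))
  then show ?thesis by (simp add: indicator_def)
qed

section \<open>Step functions on half-open intervals\<close>

inductive Ico_step :: "(real \<Rightarrow> complex) \<Rightarrow> bool" where
  Ico_step_zero: "Ico_step (\<lambda>_. 0)"
| Ico_step_add_indicator: "Ico_step f \<Longrightarrow> Ico_step (\<lambda>t. f t + c * indicator {a..<b} t)"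

lemma Ico_step_indicator: "Ico_step (\<lambda>t. c * indicator {a..<b} t)"
  using Ico_step_add_indicator[OF Ico_step_zero, of c a b] by simp

lemma Ico_step_add:
  assumes "Ico_step f" "Ico_step g"
  shows "Ico_step (\<lambda>t. f t + g t)"
  using assms(2)
proof (induction g rule: Ico_step.induct)
  case Ico_step_zero
  then show ?case using assms(1) by simp
next
  case (Ico_step_add_indicator g c a b)
  then have "Ico_step (\<lambda>t. (f t + g t) + c * indicator {a..<b} t)"
    by (intro Ico_step.Ico_step_add_indicator)
  then show ?case by (simp add: add.assoc)
qed

lemma Ico_step_cmult: "Ico_step f \<Longrightarrow> Ico_step (\<lambda>t. d * f t)"
proof (induction f rule: Ico_step.induct)
  case (Ico_step_add_indicator f c a b)
  then have "Ico_step (\<lambda>t. d * f t + (d * c) * indicator {a..<b} t)"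
    by (intro Ico_step.Ico_step_add_indicator)
  then show ?case by (simp add: distrib_left mult.assoc)
qed (simp add: Ico_step_zero)

lemma Ico_step_sum: "(\<And>i. i \<in> I \<Longrightarrow> Ico_step (f i)) \<Longrightarrow> Ico_step (\<lambda>t. \<Sum>i\<in>I. f i t)"
proof (induction I rule: infinite_finite_induct)
  case (insert x F)
  then show ?case using Ico_step_add[of "f x" "\<lambda>t. \<Sum>i\<in>F. f i t"] by simp
qed (simp_all add: Ico_step_zero)

lemma indicator_Ico_mult:
  "(indicator {a..<b::real} t :: complex) * indicator {a'..<b'} t = indicator {max a a'..<min b b'} t"
  by (auto simp: indicator_def)

lemma Ico_step_mult_indicator: "Ico_step f \<Longrightarrow> Ico_step (\<lambda>t. f t * indicator {a'..<b'} t)"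
proof (induction f rule: Ico_step.induct)
  case (Ico_step_add_indicator f c a b)
  then have "Ico_step (\<lambda>t. f t * indicator {a'..<b'} t + c * indicator {max a a'..<min b b'} t)"
    by (intro Ico_step.Ico_step_add_indicator)
  then show ?case by (simp add: distrib_right mult.assoc indicator_Ico_mult)
qed (simp add: Ico_step_zero)

lemma Ico_step_mult:
  assumes "Ico_step f" "Ico_step g"
  shows "Ico_step (\<lambda>t. f t * g t)"
  using assms(2)
proof (induction g rule: Ico_step.induct)
  case (Ico_step_add_indicator g c a b)
  then have "Ico_step (\<lambda>t. f t * g t + c * (f t * indicator {a..<b} t))"
    using assms(1) by (intro Ico_step_add Ico_step_cmult Ico_step_mult_indicator)
  then show ?case by (simp add: distrib_left mult_ac)
qed (simp add: Ico_step_zero)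

lemma indicator_Ico_affine:
  assumes "0 < (r::real)"
  shows "(indicator {a..<b} (r * s + d) :: complex) = indicator {(a - d) / r..<(b - d) / r} s"
  using assms by (simp add: indicator_def field_simps)

lemma Ico_step_affine: "Ico_step f \<Longrightarrow> 0 < r \<Longrightarrow> Ico_step (\<lambda>s. f (r * s + d))"
proof (induction f rule: Ico_step.induct)
  case (Ico_step_add_indicator f c a b)
  then have "Ico_step (\<lambda>s. f (r * s + d) + c * indicator {(a - d) / r..<(b - d) / r} s)"
    by (intro Ico_step.Ico_step_add_indicator) auto
  then show ?case using indicator_Ico_affine[OF Ico_step_add_indicator.prems] by simp
qed (simp add: Ico_step_zero)

lemma Ico_step_gact: "Ico_step f \<Longrightarrow> 0 < lam \<Longrightarrow> Ico_step (\<lambda>t. f (gact lam g t))"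
  unfolding gact_def by (rule Ico_step_affine) auto

lemma Ico_step_cnj: "Ico_step f \<Longrightarrow> Ico_step (\<lambda>t. cnj (f t))"
proof (induction f rule: Ico_step.induct)
  case (Ico_step_add_indicator f c a b)
  then have "Ico_step (\<lambda>t. cnj (f t) + cnj c * indicator {a..<b} t)"
    by (intro Ico_step.Ico_step_add_indicator)
  moreover have "cnj (indicator {a..<b} t :: complex) = indicator {a..<b} t" for t
    by (simp add: indicator_def)
  ultimately show ?case by simp
qed (simp add: Ico_step_zero)

lemma has_integral_indicator_Ico:
  "((\<lambda>t. indicator {a..<b::real} t :: complex) has_integral of_real (max 0 (b - a))) UNIV"
proof (cases "a \<le> b")
  case True
  have "((\<lambda>t. 1::complex) has_integral of_real (b - a)) {a..b}"
    using has_integral_const_real[of "1::complex" a b] True by (simp add: scaleR_conv_of_real)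
  then have "((\<lambda>t. if t \<in> {a..b} then 1::complex else 0) has_integral of_real (b - a)) UNIV"
    by (subst has_integral_restrict_UNIV)
  then have "((\<lambda>t. indicator {a..<b} t :: complex) has_integral of_real (b - a)) UNIV"
    by (rule has_integral_spike_finite[where S="{b}", rotated 2]) (auto simp: indicator_def)
  then show ?thesis using True by simp
qed simp

lemma integrable_indicator_Ico: "(indicator {a..<b::real} :: real \<Rightarrow> complex) integrable_on UNIV"
  using has_integral_indicator_Ico by blast

lemma integral_indicator_Ico:
  "integral UNIV (\<lambda>t. indicator {a..<b::real} t :: complex) = of_real (max 0 (b - a))"
  using has_integral_indicator_Ico by (rule integral_unique)

lemma Ico_step_integrable: "Ico_step f \<Longrightarrow> f integrable_on UNIV"
proof (induction f rule: Ico_step.induct)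
  case (Ico_step_add_indicator f c a b)
  then show ?case
    by (intro integrable_add integrable_on_mult_right integrable_indicator_Ico)
qed (simp add: integrable_0)

lemma integral_Ico_step_add_indicator:
  "Ico_step f \<Longrightarrow> integral UNIV (\<lambda>t. f t + c * indicator {a..<b} t)
     = integral UNIV f + c * of_real (max 0 (b - a))"
  by (subst integral_add)
    (auto simp: Ico_step_integrable integrable_on_mult_right integrable_indicator_Ico
      integral_indicator_Ico)

lemma integral_Ico_step_affine:
  "Ico_step f \<Longrightarrow> 0 < r \<Longrightarrow> integral UNIV (\<lambda>s. f (r * s + d)) = integral UNIV f / of_real r"
proof (induction f rule: Ico_step.induct)
  case (Ico_step_add_indicator f c a b)
  have r: "0 < r" by fact
  have len: "max 0 ((b - d) / r - (a - d) / r) = max 0 (b - a) / r"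
    using r by (auto simp: field_simps max_def)
  have "integral UNIV (\<lambda>s. f (r * s + d) + c * indicator {a..<b} (r * s + d))
      = integral UNIV (\<lambda>s. f (r * s + d) + c * indicator {(a - d) / r..<(b - d) / r} s)"
    using indicator_Ico_affine[OF r] by simp
  also have "\<dots> = integral UNIV (\<lambda>s. f (r * s + d)) + c * of_real (max 0 (b - a) / r)"
    using Ico_step_add_indicator r
    by (subst integral_Ico_step_add_indicator) (auto intro: Ico_step_affine simp: len)
  also have "\<dots> = (integral UNIV f + c * of_real (max 0 (b - a))) / of_real r"
    using Ico_step_add_indicator r by (simp add: add_divide_distrib)
  also have "\<dots> = integral UNIV (\<lambda>t. f t + c * indicator {a..<b} t) / of_real r"
    using Ico_step_add_indicator by (simp add: integral_Ico_step_add_indicator)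
  finally show ?case .
qed simp

lemma integral_Ico_step_real_nonneg:
  assumes "Ico_step f" and "\<And>t. f t = of_real (h t)" and "\<And>t. 0 \<le> h t"
  shows "Im (integral UNIV f) = 0 \<and> 0 \<le> Re (integral UNIV f)"
proof -
  have f: "f integrable_on UNIV" using assms(1) by (rule Ico_step_integrable)
  have "Im (integral UNIV f) = integral UNIV (Im \<circ> f)"
    using integral_linear[OF f bounded_linear_Im] by simp
  also have "Im \<circ> f = (\<lambda>_. 0)" using assms(2) by (auto simp: fun_eq_iff)
  finally have "Im (integral UNIV f) = 0" by simp
  moreover have "Re (integral UNIV f) = integral UNIV (Re \<circ> f)"
    using integral_linear[OF f bounded_linear_Re] by simp
  moreover have "integral UNIV (Re \<circ> f) \<ge> 0"
    using integrable_linear[OF f bounded_linear_Re] assms(2,3) by (intro integral_nonneg) auto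
  ultimately show ?thesis by simp
qed

lemma stepfun_iff:
  "stepfun lam f \<longleftrightarrow> (\<exists>S c. finite S \<and> S \<subseteq> {(a,b). a \<in> Gam lam \<and> b \<in> Gam lam \<and> a < b} \<and>
      f = (\<lambda>t. \<Sum>p\<in>S. c p * indicator {fst p..<snd p} t))"
proof -
  have "(\<lambda>t. \<Sum>(a,b)\<in>S. c (a,b) * indicator {a..<b} t) = (\<lambda>t. \<Sum>p\<in>S. c p * indicator {fst p..<snd p} t)"
    for S and c :: "real \<times> real \<Rightarrow> complex"
    by (simp add: split_def)
  then show ?thesis unfolding stepfun_def by simp
qed

lemma stepfun_imp_Ico_step: "stepfun lam f \<Longrightarrow> Ico_step f"
  unfolding stepfun_iff by (auto intro: Ico_step_sum Ico_step_indicator)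

lemma stepfun_zero: "stepfun lam (\<lambda>_. 0)"
  unfolding stepfun_iff by (rule exI[of _ "{}"]) simp

lemma stepfun_add:
  assumes "stepfun lam f" "stepfun lam f'"
  shows "stepfun lam (\<lambda>t. f t + f' t)"
proof -
  obtain S c where S: "finite S" "S \<subseteq> {(a,b). a \<in> Gam lam \<and> b \<in> Gam lam \<and> a < b}"
    and f: "f = (\<lambda>t. \<Sum>p\<in>S. c p * indicator {fst p..<snd p} t)"
    using assms(1) unfolding stepfun_iff by blast
  obtain S' c' where S': "finite S'" "S' \<subseteq> {(a,b). a \<in> Gam lam \<and> b \<in> Gam lam \<and> a < b}"
    and f': "f' = (\<lambda>t. \<Sum>p\<in>S'. c' p * indicator {fst p..<snd p} t)"
    using assms(2) unfolding stepfun_iff by blast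
  define d where "d p = (if p \<in> S then c p else 0) + (if p \<in> S' then c' p else 0)" for p
  have "f t = (\<Sum>p\<in>S \<union> S'. (if p \<in> S then c p else 0) * indicator {fst p..<snd p} t)" for t
    unfolding f using S(1) S'(1) by (intro sum.mono_neutral_cong_left) auto
  moreover have "f' t = (\<Sum>p\<in>S \<union> S'. (if p \<in> S' then c' p else 0) * indicator {fst p..<snd p} t)" for t
    unfolding f' using S(1) S'(1) by (intro sum.mono_neutral_cong_left) auto
  ultimately have "(\<lambda>t. f t + f' t) = (\<lambda>t. \<Sum>p\<in>S \<union> S'. d p * indicator {fst p..<snd p} t)"
    unfolding d_def by (simp add: sum.distrib[symmetric] distrib_right)
  then show ?thesis unfolding stepfun_iff using S S' by blast
qed

lemma stepfun_cmult:
  assumes "stepfun lam f"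
  shows "stepfun lam (\<lambda>t. d * f t)"
proof -
  obtain S c where S: "finite S" "S \<subseteq> {(a,b). a \<in> Gam lam \<and> b \<in> Gam lam \<and> a < b}"
    and f: "f = (\<lambda>t. \<Sum>p\<in>S. c p * indicator {fst p..<snd p} t)"
    using assms unfolding stepfun_iff by blast
  have "(\<lambda>t. d * f t) = (\<lambda>t. \<Sum>p\<in>S. (d * c p) * indicator {fst p..<snd p} t)"
    unfolding f by (simp add: sum_distrib_left mult.assoc)
  then show ?thesis unfolding stepfun_iff using S by (intro exI[of _ S]) auto
qed

lemma stepfun_indicator:
  assumes "a \<in> Gam lam" "b \<in> Gam lam"
  shows "stepfun lam (indicator {a..<b})"
proof (cases "a < b")
  case True
  have "indicator {a..<b} = (\<lambda>t. \<Sum>p\<in>{(a,b)}. (\<lambda>_. 1) p * indicator {fst p..<snd p} t :: complex)"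
    by simp
  then show ?thesis unfolding stepfun_iff using True assms by (intro exI[of _ "{(a,b)}"] exI[of _ "\<lambda>_. 1"]) simp
next
  case False
  then have "(indicator {a..<b} :: real \<Rightarrow> complex) = (\<lambda>_. 0)" by (auto simp: fun_eq_iff)
  then show ?thesis using stepfun_zero by metis
qed

section \<open>Elements of the algebraic crossed product\<close>

definition fdelta :: "(real \<Rightarrow> complex) \<Rightarrow> grp \<Rightarrow> elem" where
  "fdelta f g = (\<lambda>h t. if h = g then f t else 0)"

definition zeroE :: elem where
  "zeroE = (\<lambda>g t. 0)"

lemma supp_fdelta: "{h. fdelta f g h \<noteq> (\<lambda>_. 0)} = (if f = (\<lambda>_. 0) then {} else {g})"
  unfolding fdelta_def by (auto simp: fun_eq_iff)

lemma fdelta_zero: "fdelta (\<lambda>_. 0) g = zeroE"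
  unfolding fdelta_def zeroE_def by (auto simp: fun_eq_iff)

lemma fdelta_gunit: "fdelta f g gunit = (if g = gunit then f else (\<lambda>_. 0))"
  unfolding fdelta_def by auto

lemma eproj_eq_fdelta: "eproj = fdelta (indicator {0..<1}) gunit"
  unfolding eproj_def fdelta_def by (auto simp: fun_eq_iff)

lemma addE_fdelta: "addE (fdelta f g) (fdelta f' g) = fdelta (\<lambda>t. f t + f' t) g"
  unfolding addE_def fdelta_def by (auto simp: fun_eq_iff)

lemma scaleE_fdelta: "scaleE c (fdelta f g) = fdelta (\<lambda>t. c * f t) g"
  unfolding scaleE_def fdelta_def by (auto simp: fun_eq_iff)

lemma gauge_ext_fdelta: "gauge_ext z (fdelta f g) = fdelta (\<lambda>t. exp (\<i> * of_int (fst g) * z) * f t) g"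
  unfolding gauge_ext_def fdelta_def by (auto simp: fun_eq_iff)

lemma conv_fdelta:
  assumes "lam \<noteq> 0"
  shows "conv lam (fdelta f g) (fdelta f' h) = fdelta (\<lambda>t. f t * alpha lam g f' t) (gmul lam g h)"
proof (cases "f = (\<lambda>_. 0)")
  case True
  then show ?thesis unfolding conv_def supp_fdelta by (simp add: fdelta_def fun_eq_iff)
next
  case False
  have eq: "gmul lam (ginv lam g) k = h \<longleftrightarrow> k = gmul lam g h" for k
    using assms by auto
  show ?thesis using False unfolding conv_def supp_fdelta by (auto simp: fun_eq_iff fdelta_def alpha_def eq)
qed

lemma star_fdelta:
  assumes "lam \<noteq> 0"
  shows "star lam (fdelta f g) = fdelta (alpha lam (ginv lam g) (\<lambda>t. cnj (f t))) (ginv lam g)"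
proof -
  have eq: "ginv lam h = g \<longleftrightarrow> h = ginv lam g" for h
    using assms by auto
  show ?thesis unfolding star_def fdelta_def by (auto simp: fun_eq_iff alpha_def eq)
qed

lemma conv_gunit:
  "conv lam x y gunit
     = (\<lambda>t. \<Sum>h\<in>{h. x h \<noteq> (\<lambda>_. 0)}. x h t * y (ginv lam h) (gact lam (ginv lam h) t))"
  unfolding conv_def alpha_def by simp

lemma alg_Ico_step: "alg lam x \<Longrightarrow> Ico_step (x g)"
  unfolding alg_def by (blast intro: stepfun_imp_Ico_step)

lemma alg_zeroE: "alg lam zeroE"
  unfolding alg_def zeroE_def by (simp add: stepfun_zero)

lemma alg_addE:
  assumes "alg lam x" "alg lam y"
  shows "alg lam (addE x y)"
proof -
  have "{g. addE x y g \<noteq> (\<lambda>_. 0)} \<subseteq> {g. x g \<noteq> (\<lambda>_. 0)} \<union> {g. y g \<noteq> (\<lambda>_. 0)}"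
    unfolding addE_def by (auto simp: fun_eq_iff)
  with assms show ?thesis
    unfolding alg_def by (auto simp: addE_def intro: stepfun_add finite_subset)
qed

lemma alg_scaleE: "alg lam x \<Longrightarrow> alg lam (scaleE c x)"
proof -
  assume x: "alg lam x"
  have "{g. scaleE c x g \<noteq> (\<lambda>_. 0)} \<subseteq> {g. x g \<noteq> (\<lambda>_. 0)}"
    unfolding scaleE_def by (auto simp: fun_eq_iff)
  with x show ?thesis
    unfolding alg_def by (auto simp: scaleE_def intro: stepfun_cmult finite_subset)
qed

lemma conv_eproj_left: "conv lam eproj z = (\<lambda>g t. indicator {0..<1} t * z g t)"
proof -
  have "{g. eproj g \<noteq> (\<lambda>_. 0)} = {gunit}"
    unfolding eproj_def by (auto simp: fun_eq_iff indicator_def intro: exI[of _ 0])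
  then show ?thesis unfolding conv_def by (auto simp: fun_eq_iff eproj_def alpha_def)
qed

lemma conv_eproj_right:
  assumes "lam \<noteq> 0" "finite {g. x g \<noteq> (\<lambda>_. 0)}"
  shows "conv lam x eproj = (\<lambda>g t. x g t * indicator {0..<1} (gact lam (ginv lam g) t))"
proof (intro ext)
  fix g t
  have "gmul lam (ginv lam h) g = gunit \<longleftrightarrow> h = g" for h
    using assms(1) by (metis gmul_gmul_ginv gmul_gunit_right gmul_ginv_left)
  then have "conv lam x eproj g t
      = (\<Sum>h\<in>{g. x g \<noteq> (\<lambda>_. 0)}. if h = g then x g t * indicator {0..<1} (gact lam (ginv lam g) t) else 0)"
    unfolding conv_def by (intro sum.cong) (auto simp: eproj_def alpha_def)
  also have "\<dots> = x g t * indicator {0..<1} (gact lam (ginv lam g) t)"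
    using assms(2) by (auto simp: sum.delta')
  finally show "conv lam x eproj g t = x g t * indicator {0..<1} (gact lam (ginv lam g) t)" .
qed

lemma Qalg_iff:
  assumes "lam \<noteq> 0"
  shows "Qalg lam x \<longleftrightarrow> alg lam x \<and>
    (\<forall>g t. x g t \<noteq> 0 \<longrightarrow> t \<in> {0..<1} \<and> gact lam (ginv lam g) t \<in> {0..<1})"
proof (cases "alg lam x")
  case True
  then have fin: "finite {g. x g \<noteq> (\<lambda>_. 0)}" unfolding alg_def by simp
  have "conv lam eproj (conv lam x eproj)
      = (\<lambda>g t. indicator {0..<1} t * (x g t * indicator {0..<1} (gact lam (ginv lam g) t)))"
    unfolding conv_eproj_left conv_eproj_right[OF assms fin] ..
  moreover have "indicator {0..<1} t * (x g t * indicator {0..<1} (gact lam (ginv lam g) t)) = x g t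
     \<longleftrightarrow> (x g t \<noteq> 0 \<longrightarrow> t \<in> {0..<1} \<and> gact lam (ginv lam g) t \<in> {0..<1})" for g t
    by (auto simp: indicator_def)
  ultimately show ?thesis using True unfolding Qalg_def fun_eq_iff by metis
next
  case False
  then show ?thesis unfolding Qalg_def by simp
qed

lemma Qalg_zeroE: "lam \<noteq> 0 \<Longrightarrow> Qalg lam zeroE"
  using alg_zeroE[of lam] by (simp add: Qalg_iff zeroE_def)

lemma Qalg_addE:
  assumes "lam \<noteq> 0" "Qalg lam x" "Qalg lam y"
  shows "Qalg lam (addE x y)"
proof -
  have "addE x y g t \<noteq> 0 \<Longrightarrow> x g t \<noteq> 0 \<or> y g t \<noteq> 0" for g t
    unfolding addE_def by auto
  with assms show ?thesis unfolding Qalg_iff[OF assms(1)] by (meson alg_addE)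
qed

lemma Qalg_scaleE: "lam \<noteq> 0 \<Longrightarrow> Qalg lam x \<Longrightarrow> Qalg lam (scaleE c x)"
  using alg_scaleE[of lam x c] by (auto simp: Qalg_iff scaleE_def)

lemma Qalg_sum:
  assumes "lam \<noteq> 0" "\<And>i. i \<in> I \<Longrightarrow> Qalg lam (B i)"
  shows "Qalg lam (\<lambda>g t. \<Sum>i\<in>I. B i g t)"
  using assms(2)
proof (induction I rule: infinite_finite_induct)
  case (insert j I)
  then have "Qalg lam (addE (B j) (\<lambda>g t. \<Sum>i\<in>I. B i g t))"
    by (intro Qalg_addE[OF assms(1)]) auto
  with insert.hyps show ?case unfolding addE_def by simp
qed (use Qalg_zeroE[OF assms(1)] in \<open>simp_all add: zeroE_def\<close>)

section \<open>The state \<psi> is KMS\<close>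

lemma psi_addE: "alg lam x \<Longrightarrow> alg lam y \<Longrightarrow> psi (addE x y) = psi x + psi y"
  unfolding psi_def addE_def by (intro integral_add Ico_step_integrable alg_Ico_step)

lemma psi_scaleE: "psi (scaleE c x) = c * psi x"
  unfolding psi_def scaleE_def by simp

lemma psi_star_conv_nonneg:
  assumes "0 < lam" "alg lam x"
  shows "Im (psi (conv lam (star lam x) x)) = 0 \<and> 0 \<le> Re (psi (conv lam (star lam x) x))"
proof -
  let ?S = "{h. star lam x h \<noteq> (\<lambda>_. 0)}"
  let ?x' = "\<lambda>h t. x (ginv lam h) (gact lam (ginv lam h) t)"
  have summand: "star lam x h t * ?x' h t = of_real ((cmod (?x' h t))\<^sup>2)" for h t
    unfolding star_def alpha_def complex_norm_square by simp
  have "Ico_step (\<lambda>t. cnj (?x' h t) * ?x' h t)" for h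
    using assms by (intro Ico_step_mult Ico_step_cnj Ico_step_gact alg_Ico_step)
  then have "Ico_step (conv lam (star lam x) x gunit)"
    unfolding conv_gunit by (intro Ico_step_sum) (simp add: star_def alpha_def)
  moreover have "conv lam (star lam x) x gunit t = of_real (\<Sum>h\<in>?S. (cmod (?x' h t))\<^sup>2)" for t
    unfolding conv_gunit summand by simp
  ultimately show ?thesis unfolding psi_def
    by (rule integral_Ico_step_real_nonneg) (simp add: sum_nonneg)
qed

lemma psi_eproj: "psi eproj = 1"
  unfolding psi_def eproj_def using integral_indicator_Ico[of 0 1] by simp

lemma is_state_psi: "0 < lam \<Longrightarrow> is_state lam psi"
  unfolding is_state_def using psi_addE psi_scaleE psi_star_conv_nonneg psi_eproj
  by (auto simp: Qalg_def)

lemma exp_gauge_ext_ln: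
  assumes "0 < lam"
  shows "exp (\<i> * of_int n * (\<i> * of_real (ln (1 / lam)))) = complex_of_real (lam powi n)"
proof -
  have "exp (\<i> * of_int n * (\<i> * of_real (ln (1 / lam)))) = of_real (exp (of_int n * ln lam))"
    using assms by (simp add: exp_of_real[symmetric] ln_div algebra_simps)
  also have "exp (of_int n * ln lam) = lam powi n"
    using assms by (simp add: exp_power_int[symmetric])
  finally show ?thesis .
qed

lemma psi_conv:
  assumes "0 < lam" "alg lam x" "\<And>g. Ico_step (y g)"
  shows "psi (conv lam x y) = (\<Sum>h\<in>{h. x h \<noteq> (\<lambda>_. 0)}.
    integral UNIV (\<lambda>t. x h t * y (ginv lam h) (gact lam (ginv lam h) t)))"
proof -
  have "Ico_step (\<lambda>t. x h t * y (ginv lam h) (gact lam (ginv lam h) t))" for h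
    by (intro Ico_step_mult Ico_step_gact assms(1,3) alg_Ico_step[OF assms(2)])
  then show ?thesis
    unfolding psi_def conv_gunit using assms(2)
    by (subst integral_sum) (auto simp: alg_def intro: Ico_step_integrable)
qed

lemma integral_Ico_step_gact_swap:
  assumes "0 < lam" "Ico_step f" "Ico_step g"
  shows "integral UNIV (\<lambda>t. g t * f (gact lam h t))
       = integral UNIV (\<lambda>t. f t * g (gact lam (ginv lam h) t)) / of_real (lam powi fst h)"
proof -
  have "integral UNIV (\<lambda>t. g t * f (gact lam h t))
      = integral UNIV (\<lambda>s. f (gact lam h s) * g (gact lam (ginv lam h) (gact lam h s)))"
    using assms(1) by (simp add: mult.commute)
  also have "\<dots> = integral UNIV (\<lambda>s. (\<lambda>t. f t * g (gact lam (ginv lam h) t)) (lam powi fst h * s + snd h))"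
    unfolding gact_def[of lam h] by simp
  also have "\<dots> = integral UNIV (\<lambda>t. f t * g (gact lam (ginv lam h) t)) / of_real (lam powi fst h)"
    using assms by (intro integral_Ico_step_affine Ico_step_mult Ico_step_gact) simp_all
  finally show ?thesis .
qed

lemma psi_KMS_condition:
  assumes lam: "0 < lam" and x: "alg lam x" and y: "alg lam y"
  shows "psi (conv lam x (gauge_ext (\<i> * of_real (ln (1 / lam))) y)) = psi (conv lam y x)"
proof -
  have l0: "lam \<noteq> 0" using lam by simp
  define Sx where "Sx = {h. x h \<noteq> (\<lambda>_. 0)}"
  define Sy where "Sy = {h. y h \<noteq> (\<lambda>_. 0)}"
  have fin: "finite Sx" "finite Sy" using x y unfolding alg_def Sx_def Sy_def by auto
  define T where "T h = integral UNIV (\<lambda>t. x h t * y (ginv lam h) (gact lam (ginv lam h) t))" for h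
  define U where "U k = integral UNIV (\<lambda>t. y k t * x (ginv lam k) (gact lam (ginv lam k) t))" for k
  define w where "w h = complex_of_real (lam powi (- fst h))" for h :: grp
  have change_of_variables: "w h * T h = U (ginv lam h)" for h
    using integral_Ico_step_gact_swap[OF lam alg_Ico_step[OF x, of h] alg_Ico_step[OF y, of "ginv lam h"]] lam
    unfolding T_def U_def w_def by (simp add: l0 power_int_minus field_simps)
  have gauge: "gauge_ext (\<i> * of_real (ln (1 / lam))) y g = (\<lambda>t. w (ginv lam g) * y g t)" for g
    unfolding gauge_ext_def w_def exp_gauge_ext_ln[OF lam] by (simp add: l0)
  have gauge_step: "Ico_step (gauge_ext (\<i> * of_real (ln (1 / lam))) y g)" for g
    unfolding gauge using y by (intro Ico_step_cmult alg_Ico_step)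
  have "psi (conv lam x (gauge_ext (\<i> * of_real (ln (1 / lam))) y)) = (\<Sum>h\<in>Sx. w h * T h)"
    unfolding psi_conv[OF lam x gauge_step] unfolding gauge Sx_def T_def
    by (simp add: l0 mult.left_commute)
  also have "\<dots> = (\<Sum>h\<in>Sx \<union> ginv lam ` Sy. w h * T h)"
  proof (rule sum.mono_neutral_left)
    show "\<forall>h\<in>Sx \<union> ginv lam ` Sy - Sx. w h * T h = 0"
      unfolding T_def Sx_def by auto
  qed (use fin in auto)
  also have "\<dots> = (\<Sum>h\<in>Sx \<union> ginv lam ` Sy. U (ginv lam h))"
    using change_of_variables by simp
  also have "\<dots> = (\<Sum>k\<in>ginv lam ` (Sx \<union> ginv lam ` Sy). U k)"
    by (subst sum.reindex) (simp_all add: inj_on_ginv[OF l0])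
  also have "ginv lam ` (Sx \<union> ginv lam ` Sy) = ginv lam ` Sx \<union> Sy"
    using l0 by (auto simp: image_Un image_image)
  also have "(\<Sum>k\<in>ginv lam ` Sx \<union> Sy. U k) = (\<Sum>k\<in>Sy. U k)"
  proof (rule sum.mono_neutral_right)
    show "\<forall>k\<in>ginv lam ` Sx \<union> Sy - Sy. U k = 0"
      unfolding U_def Sy_def by auto
  qed (use fin in auto)
  also have "\<dots> = psi (conv lam y x)"
    unfolding psi_conv[OF lam y alg_Ico_step[OF x]] U_def Sy_def ..
  finally show ?thesis .
qed

lemma is_KMS_psi: "0 < lam \<Longrightarrow> is_KMS lam (ln (1 / lam)) psi"
  unfolding is_KMS_def using is_state_psi psi_KMS_condition by (auto simp: Qalg_def)

section \<open>Generators and states on Q_alg\<close>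

definition admissible :: "real \<Rightarrow> grp \<Rightarrow> real \<Rightarrow> real \<Rightarrow> bool" where
  "admissible lam g c d \<longleftrightarrow> g \<in> Gcarrier lam \<and> c \<in> Gam lam \<and> d \<in> Gam lam \<and>
     (c < d \<longrightarrow> 0 \<le> c \<and> d \<le> 1 \<and> snd g \<le> c \<and> d \<le> lam powi fst g + snd g)"

lemma admissible_gunit:
  "c \<in> Gam lam \<Longrightarrow> d \<in> Gam lam \<Longrightarrow> (c < d \<Longrightarrow> 0 \<le> c \<and> d \<le> 1) \<Longrightarrow> admissible lam gunit c d"
  unfolding admissible_def by (auto simp: gunit_def Gcarrier_def Gam_0)

lemma Qalg_fdelta_indicator:
  assumes "0 < lam" "admissible lam g c d"
  shows "Qalg lam (fdelta (indicator {c..<d}) g)"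
proof -
  have g: "g \<in> Gcarrier lam" and cd: "c \<in> Gam lam" "d \<in> Gam lam"
    using assms(2) unfolding admissible_def by auto
  have "stepfun lam (fdelta (indicator {c..<d}) g h)" for h
    using cd by (cases "h = g") (simp_all add: fdelta_def stepfun_zero stepfun_indicator)
  then have "alg lam (fdelta (indicator {c..<d}) g)"
    unfolding alg_def supp_fdelta using g by auto
  moreover have "t \<in> {0..<1} \<and> gact lam (ginv lam g) t \<in> {0..<1}"
    if "(indicator {c..<d} t :: complex) \<noteq> 0" for t
  proof -
    from that have t: "c \<le> t" "t < d" by (auto simp: indicator_def split: if_splits)
    with assms(2) have "0 \<le> c" "d \<le> 1" "snd g \<le> c" "d \<le> lam powi fst g + snd g"
      unfolding admissible_def by auto
    with t show ?thesis unfolding gact_ginv_in_unit_interval_iff[OF assms(1)] by simp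
  qed
  ultimately show ?thesis
    using assms(1) by (simp add: Qalg_iff fdelta_def)
qed

lemma Qalg_coefficient_cutoff:
  assumes "0 < lam" "Qalg lam x"
  shows "x h t = x h t * indicator {max 0 (snd h)..<min 1 (lam powi fst h + snd h)} t"
proof (cases "x h t = 0")
  case False
  have "\<forall>g t. x g t \<noteq> 0 \<longrightarrow> t \<in> {0..<1} \<and> gact lam (ginv lam g) t \<in> {0..<1}"
    using assms Qalg_iff[of lam x] by simp
  with False have "t \<in> {0..<1}" "gact lam (ginv lam h) t \<in> {0..<1}" by blast+
  then show ?thesis unfolding gact_ginv_in_unit_interval_iff[OF assms(1)] by simp
qed simp

lemma alg_stepfun_representation:
  assumes "alg lam x"
  obtains S cf where "\<And>g. finite (S g)" "\<And>g. S g \<subseteq> {(a,b). a \<in> Gam lam \<and> b \<in> Gam lam \<and> a < b}"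
    "\<And>g. x g = (\<lambda>t. \<Sum>p\<in>S g. cf g p * indicator {fst p..<snd p} t)"
proof -
  have "\<forall>g. \<exists>S c. finite S \<and> S \<subseteq> {(a,b). a \<in> Gam lam \<and> b \<in> Gam lam \<and> a < b} \<and>
      x g = (\<lambda>t. \<Sum>p\<in>S. c p * indicator {fst p..<snd p} t)"
    using assms unfolding alg_def stepfun_iff by blast
  then have "\<exists>S. \<forall>g. \<exists>c. finite (S g) \<and> S g \<subseteq> {(a,b). a \<in> Gam lam \<and> b \<in> Gam lam \<and> a < b} \<and>
      x g = (\<lambda>t. \<Sum>p\<in>S g. c p * indicator {fst p..<snd p} t)"
    by (rule choice)
  then obtain S where "\<forall>g. \<exists>c. finite (S g) \<and> S g \<subseteq> {(a,b). a \<in> Gam lam \<and> b \<in> Gam lam \<and> a < b} \<and>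
      x g = (\<lambda>t. \<Sum>p\<in>S g. c p * indicator {fst p..<snd p} t)"
    by blast
  then have "\<exists>cf. \<forall>g. finite (S g) \<and> S g \<subseteq> {(a,b). a \<in> Gam lam \<and> b \<in> Gam lam \<and> a < b} \<and>
      x g = (\<lambda>t. \<Sum>p\<in>S g. cf g p * indicator {fst p..<snd p} t)"
    by (rule choice)
  then show thesis using that by blast
qed

lemma admissible_cut:
  assumes "lam \<noteq> 0" "g \<in> Gcarrier lam" "a \<in> Gam lam" "b \<in> Gam lam"
  shows "admissible lam g (max a (max 0 (snd g))) (min b (min 1 (lam powi fst g + snd g)))"
proof -
  have "max 0 (snd g) \<in> Gam lam"
    using assms(2) by (intro Gam_max Gam_0) (simp add: Gcarrier_def)
  moreover have "min 1 (lam powi fst g + snd g) \<in> Gam lam"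
    using assms(1,2) by (intro Gam_min Gam_1 Gam_add Gam_powi) (simp_all add: Gcarrier_def)
  ultimately show ?thesis
    using assms unfolding admissible_def by (simp add: Gam_max Gam_min le_max_iff_disj min_le_iff_disj)
qed

lemma Qalg_decompose:
  assumes "0 < lam" "Qalg lam x"
  obtains I :: "(grp \<times> real \<times> real) set" and g c d coef
  where "finite I" "\<And>i. i \<in> I \<Longrightarrow> admissible lam (g i) (c i) (d i)"
    "x = (\<lambda>h t. \<Sum>i\<in>I. scaleE (coef i) (fdelta (indicator {c i..<d i}) (g i)) h t)"
proof -
  have l0: "lam \<noteq> 0" and alg: "alg lam x" using assms unfolding Qalg_def by simp_all
  define F where "F = {g. x g \<noteq> (\<lambda>_. 0)}"
  have F: "finite F" "F \<subseteq> Gcarrier lam" using alg unfolding alg_def F_def by auto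
  obtain S cf where S: "\<And>g. finite (S g)" "\<And>g. S g \<subseteq> {(a,b). a \<in> Gam lam \<and> b \<in> Gam lam \<and> a < b}"
    and xg: "\<And>g. x g = (\<lambda>t. \<Sum>p\<in>S g. cf g p * indicator {fst p..<snd p} t)"
    using alg_stepfun_representation[OF alg] by blast
  define lo where "lo g = max 0 (snd g)" for g :: grp
  define hi where "hi g = min 1 (lam powi fst g + snd g)" for g :: grp
  define c where "c i = max (fst (snd i)) (lo (fst i))" for i :: "grp \<times> real \<times> real"
  define d where "d i = min (snd (snd i)) (hi (fst i))" for i :: "grp \<times> real \<times> real"
  have "finite (Sigma F S)" using F(1) S(1) by auto
  moreover have "admissible lam (fst i) (c i) (d i)" if "i \<in> Sigma F S" for i
    using that S(2)[of "fst i"] F(2) unfolding c_def d_def lo_def hi_def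
    by (intro admissible_cut l0) auto
  moreover have "x h t = (\<Sum>i\<in>Sigma F S. scaleE (cf (fst i) (snd i)) (fdelta (indicator {c i..<d i}) (fst i)) h t)"
    for h t
  proof -
    let ?cut = "\<lambda>p. indicator {fst p..<snd p} t * indicator {lo h..<hi h} t :: complex"
    have cut: "scaleE (cf g p) (fdelta (indicator {c (g, p)..<d (g, p)}) g) h t
        = (if g = h then cf h p * ?cut p else 0)" for g p
      by (simp add: scaleE_def fdelta_def c_def d_def indicator_Ico_mult)
    have "(\<Sum>i\<in>Sigma F S. scaleE (cf (fst i) (snd i)) (fdelta (indicator {c i..<d i}) (fst i)) h t)
        = (\<Sum>g\<in>F. \<Sum>p\<in>S g. scaleE (cf g p) (fdelta (indicator {c (g, p)..<d (g, p)}) g) h t)"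
      using F(1) S(1) by (subst sum.Sigma) (auto simp: case_prod_beta')
    also have "\<dots> = (\<Sum>g\<in>F. if g = h then (\<Sum>p\<in>S h. cf h p * ?cut p) else 0)"
      by (intro sum.cong refl) (auto simp: cut)
    also have "\<dots> = (if h \<in> F then x h t * indicator {lo h..<hi h} t else 0)"
      using F(1) by (simp add: sum.delta xg[of h] sum_distrib_right mult.assoc)
    also have "\<dots> = x h t"
      using Qalg_coefficient_cutoff[OF assms, of h t] unfolding lo_def hi_def F_def by auto
    finally show ?thesis by simp
  qed
  ultimately show ?thesis
    by (intro that[where g = fst and coef = "\<lambda>i. cf (fst i) (snd i)"]) (auto simp: fun_eq_iff)
qed

lemma is_state_zeroE:
  assumes "is_state lam L" "lam \<noteq> 0"
  shows "L zeroE = 0"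
proof -
  have "L (scaleE 0 zeroE) = 0 * L zeroE"
    using assms Qalg_zeroE unfolding is_state_def by blast
  moreover have "scaleE 0 zeroE = zeroE" unfolding scaleE_def zeroE_def by simp
  ultimately show ?thesis by simp
qed

lemma is_state_sum:
  assumes "is_state lam L" "lam \<noteq> 0" "\<And>i. i \<in> I \<Longrightarrow> Qalg lam (B i)"
  shows "L (\<lambda>g t. \<Sum>i\<in>I. B i g t) = (\<Sum>i\<in>I. L (B i))"
  using assms(3)
proof (induction I rule: infinite_finite_induct)
  case (insert j I)
  have "L (addE (B j) (\<lambda>g t. \<Sum>i\<in>I. B i g t)) = L (B j) + L (\<lambda>g t. \<Sum>i\<in>I. B i g t)"
    using assms(1,2) insert.prems Qalg_sum[OF assms(2), of I B] unfolding is_state_def by simp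
  with insert show ?case unfolding addE_def by simp
qed (use is_state_zeroE[OF assms(1,2)] in \<open>simp_all add: zeroE_def\<close>)

lemma is_state_eqI:
  assumes "0 < lam" "is_state lam L1" "is_state lam L2" "Qalg lam x"
    and gen: "\<And>g c d. admissible lam g c d
      \<Longrightarrow> L1 (fdelta (indicator {c..<d}) g) = L2 (fdelta (indicator {c..<d}) g)"
  shows "L1 x = L2 x"
proof (rule Qalg_decompose[OF assms(1,4)])
  fix I :: "(grp \<times> real \<times> real) set" and g c d coef
  assume I: "\<And>i. i \<in> I \<Longrightarrow> admissible lam (g i) (c i) (d i)"
    and x: "x = (\<lambda>h t. \<Sum>i\<in>I. scaleE (coef i) (fdelta (indicator {c i..<d i}) (g i)) h t)"
  have l0: "lam \<noteq> 0" using assms(1) by simp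
  have Q: "Qalg lam (fdelta (indicator {c i..<d i}) (g i))" if "i \<in> I" for i
    using Qalg_fdelta_indicator[OF assms(1) I[OF that]] .
  have expand: "L x = (\<Sum>i\<in>I. coef i * L (fdelta (indicator {c i..<d i}) (g i)))"
    if L: "is_state lam L" for L
  proof -
    have scale: "L (scaleE a y) = a * L y" if "Qalg lam y" for a y
      using L that unfolding is_state_def by blast
    have "L x = (\<Sum>i\<in>I. L (scaleE (coef i) (fdelta (indicator {c i..<d i}) (g i))))"
      unfolding x by (rule is_state_sum[OF L l0]) (simp add: Qalg_scaleE[OF l0] Q)
    also have "\<dots> = (\<Sum>i\<in>I. coef i * L (fdelta (indicator {c i..<d i}) (g i)))"
      by (rule sum.cong) (simp_all add: scale Q)
    finally show ?thesis .
  qed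
  show "L1 x = L2 x"
    unfolding expand[OF assms(2)] expand[OF assms(3)] by (rule sum.cong) (simp_all add: gen I)
qed

section \<open>Uniqueness of the KMS state\<close>

locale kms_state =
  fixes lam \<beta> :: real and \<phi> :: "elem \<Rightarrow> complex"
  assumes lam_pos: "0 < lam" and lam_less_1: "lam < 1" and KMS: "is_KMS lam \<beta> \<phi>"
begin

lemma lam_nonzero: "lam \<noteq> 0"
  using lam_pos by simp

lemma state: "is_state lam \<phi>"
  using KMS unfolding is_KMS_def by simp

lemma phi_addE: "Qalg lam x \<Longrightarrow> Qalg lam y \<Longrightarrow> \<phi> (addE x y) = \<phi> x + \<phi> y"
  using state unfolding is_state_def by blast

lemma phi_scaleE: "Qalg lam x \<Longrightarrow> \<phi> (scaleE c x) = c * \<phi> x"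
  using state unfolding is_state_def by blast

lemma phi_eproj: "\<phi> eproj = 1"
  using state unfolding is_state_def by blast

definition phi_Ico :: "grp \<Rightarrow> real \<Rightarrow> real \<Rightarrow> complex" where
  "phi_Ico g c d = \<phi> (fdelta (indicator {c..<d}) g)"

definition kms_factor :: "int \<Rightarrow> complex" where
  "kms_factor n = of_real (exp (- (of_int n * \<beta>)))"

lemma Qalg_admissible: "admissible lam g c d \<Longrightarrow> Qalg lam (fdelta (indicator {c..<d}) g)"
  by (rule Qalg_fdelta_indicator[OF lam_pos])

lemma phi_Ico_empty: "d \<le> c \<Longrightarrow> phi_Ico g c d = 0"
proof -
  assume "d \<le> c"
  then have "(indicator {c..<d} :: real \<Rightarrow> complex) = (\<lambda>_. 0)" by (auto simp: fun_eq_iff)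
  then show ?thesis
    unfolding phi_Ico_def using is_state_zeroE[OF state lam_nonzero] by (simp add: fdelta_zero)
qed

lemma phi_Ico_split:
  assumes "admissible lam g c d" "m \<in> Gam lam" "c \<le> m" "m \<le> d"
  shows "phi_Ico g c d = phi_Ico g c m + phi_Ico g m d"
proof -
  have "admissible lam g c m" "admissible lam g m d" using assms unfolding admissible_def by auto
  note sum = phi_addE[OF Qalg_admissible[OF this(1)] Qalg_admissible[OF this(2)]]
  have "indicator {c..<d} = (\<lambda>t. indicator {c..<m} t + (indicator {m..<d} t :: complex))"
    using assms(3,4) by (auto simp: fun_eq_iff indicator_def)
  then show ?thesis
    unfolding phi_Ico_def using sum by (simp add: addE_fdelta)
qed

lemma gauge_ext_i_beta: "gauge_ext (\<i> * of_real \<beta>) (fdelta f h) = scaleE (kms_factor (fst h)) (fdelta f h)"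
proof -
  have "exp (\<i> * of_int (fst h) * (\<i> * of_real \<beta>)) = kms_factor (fst h)"
    unfolding kms_factor_def by (simp add: exp_of_real[symmetric] algebra_simps)
  then show ?thesis unfolding gauge_ext_fdelta scaleE_fdelta by simp
qed

lemma KMS_fdelta:
  assumes "Qalg lam (fdelta f g)" "Qalg lam (fdelta f' h)"
    "Qalg lam (fdelta (\<lambda>t. f t * alpha lam g f' t) (gmul lam g h))"
  shows "kms_factor (fst h) * \<phi> (fdelta (\<lambda>t. f t * alpha lam g f' t) (gmul lam g h))
       = \<phi> (fdelta (\<lambda>t. f' t * alpha lam h f t) (gmul lam h g))"
proof -
  have "\<phi> (conv lam (fdelta f g) (gauge_ext (\<i> * of_real \<beta>) (fdelta f' h)))
      = \<phi> (conv lam (fdelta f' h) (fdelta f g))"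
    using KMS assms(1,2) unfolding is_KMS_def by blast
  moreover have "conv lam (fdelta f g) (gauge_ext (\<i> * of_real \<beta>) (fdelta f' h))
      = scaleE (kms_factor (fst h)) (fdelta (\<lambda>t. f t * alpha lam g f' t) (gmul lam g h))"
    unfolding gauge_ext_i_beta scaleE_fdelta conv_fdelta[OF lam_nonzero]
    by (simp add: alpha_def mult.left_commute)
  ultimately show ?thesis
    using phi_scaleE[OF assms(3)] by (simp add: conv_fdelta[OF lam_nonzero])
qed

lemma kms_cutoff:
  assumes "admissible lam g c d" "admissible lam gunit k1 k2" "admissible lam g c1 d1"
    and left: "\<And>t. (indicator {k1..<k2} t :: complex) * indicator {c..<d} t = indicator {c1..<d1} t"
    and right: "\<And>t. (indicator {c..<d} t :: complex) * indicator {k1..<k2} (gact lam (ginv lam g) t)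
      = indicator {c2..<d2} t"
  shows "kms_factor (fst g) * phi_Ico g c1 d1 = phi_Ico g c2 d2"
proof -
  have "(\<lambda>t. indicator {k1..<k2} t * alpha lam gunit (indicator {c..<d}) t) = (indicator {c1..<d1} :: real \<Rightarrow> complex)"
    "(\<lambda>t. indicator {c..<d} t * alpha lam g (indicator {k1..<k2}) t) = (indicator {c2..<d2} :: real \<Rightarrow> complex)"
    using left right by (simp_all add: alpha_def fun_eq_iff)
  with KMS_fdelta[of "indicator {k1..<k2}" gunit "indicator {c..<d}" g] assms(1-3)
  show ?thesis unfolding phi_Ico_def by (simp add: Qalg_admissible)
qed

lemma admissible_ginv:
  assumes "admissible lam g c d"
  shows "admissible lam (ginv lam g) (gact lam (ginv lam g) c) (gact lam (ginv lam g) d)"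
proof -
  have g: "g \<in> Gcarrier lam" and cd: "c \<in> Gam lam" "d \<in> Gam lam"
    using assms unfolding admissible_def by auto
  define p where "p = lam powi fst g"
  have p: "0 < p" unfolding p_def using lam_pos by simp
  have e: "gact lam (ginv lam g) t = (t - snd g) / p" for t
    unfolding p_def by (rule gact_ginv_eq[OF lam_pos])
  have sg: "snd (ginv lam g) = - snd g / p" "lam powi fst (ginv lam g) = 1 / p"
    unfolding p_def ginv_def by (simp_all add: power_int_minus divide_inverse)
  have "c < d \<Longrightarrow> 0 \<le> c \<and> d \<le> 1 \<and> snd g \<le> c \<and> d \<le> p + snd g"
    using assms unfolding admissible_def p_def by auto
  then have "gact lam (ginv lam g) c < gact lam (ginv lam g) d \<longrightarrow>
     0 \<le> gact lam (ginv lam g) c \<and> gact lam (ginv lam g) d \<le> 1 \<and>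
     snd (ginv lam g) \<le> gact lam (ginv lam g) c \<and>
     gact lam (ginv lam g) d \<le> lam powi fst (ginv lam g) + snd (ginv lam g)"
    unfolding e sg using p by (auto simp: field_simps)
  then show ?thesis
    unfolding admissible_def using ginv_Gcarrier[OF lam_nonzero g] cd
    by (simp add: gact_Gam[OF lam_nonzero] ginv_Gcarrier[OF lam_nonzero g])
qed

lemma phi_Ico_gunit_transport:
  assumes "admissible lam g c d"
  shows "kms_factor (- fst g) * phi_Ico gunit c d
       = phi_Ico gunit (gact lam (ginv lam g) c) (gact lam (ginv lam g) d)"
proof -
  let ?c' = "gact lam (ginv lam g) c" and ?d' = "gact lam (ginv lam g) d"
  have unit: "admissible lam gunit c d"
    using assms unfolding admissible_def by (auto simp: gunit_def Gcarrier_def Gam_0)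
  have "(\<lambda>t. indicator {c..<d} t * alpha lam g (indicator {?c'..<?d'}) t) = (indicator {c..<d} :: real \<Rightarrow> complex)"
    unfolding alpha_def indicator_Ico_gact[OF lam_pos] ginv_ginv[OF lam_nonzero]
    using lam_nonzero by (auto simp: fun_eq_iff indicator_def)
  moreover have "(\<lambda>t. indicator {?c'..<?d'} t * alpha lam (ginv lam g) (indicator {c..<d}) t)
      = (indicator {?c'..<?d'} :: real \<Rightarrow> complex)"
    unfolding alpha_def ginv_ginv[OF lam_nonzero] indicator_Ico_gact[OF lam_pos]
    by (auto simp: fun_eq_iff indicator_def)
  ultimately show ?thesis
    using KMS_fdelta[of "indicator {c..<d}" g "indicator {?c'..<?d'}" "ginv lam g"]
      Qalg_admissible[OF assms] Qalg_admissible[OF admissible_ginv[OF assms]] Qalg_admissible[OF unit]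
    unfolding phi_Ico_def by (simp add: lam_nonzero)
qed

lemma phi_Ico_gunit_nonneg:
  assumes "admissible lam gunit c d"
  shows "Im (phi_Ico gunit c d) = 0 \<and> 0 \<le> Re (phi_Ico gunit c d)"
proof -
  let ?x = "fdelta (indicator {c..<d}) gunit"
  have "(\<lambda>t. cnj (indicator {c..<d} t :: complex)) = indicator {c..<d}"
    by (auto simp: fun_eq_iff indicator_def)
  then have "conv lam (star lam ?x) ?x = ?x"
    unfolding star_fdelta[OF lam_nonzero] conv_fdelta[OF lam_nonzero]
    by (simp add: alpha_def fun_eq_iff indicator_def fdelta_def)
  then show ?thesis
    using state Qalg_admissible[OF assms] unfolding is_state_def phi_Ico_def by metis
qed

definition mu :: "real \<Rightarrow> real \<Rightarrow> real" where
  "mu c d = Re (phi_Ico gunit c d)"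

lemma phi_Ico_gunit_eq_mu: "admissible lam gunit c d \<Longrightarrow> phi_Ico gunit c d = of_real (mu c d)"
  unfolding mu_def using phi_Ico_gunit_nonneg by (simp add: complex_eq_iff)

lemma mu_nonneg: "admissible lam gunit c d \<Longrightarrow> 0 \<le> mu c d"
  unfolding mu_def using phi_Ico_gunit_nonneg by simp

lemma mu_empty: "d \<le> c \<Longrightarrow> mu c d = 0"
  unfolding mu_def using phi_Ico_empty by simp

lemma mu_split:
  "admissible lam gunit c d \<Longrightarrow> m \<in> Gam lam \<Longrightarrow> c \<le> m \<Longrightarrow> m \<le> d \<Longrightarrow> mu c d = mu c m + mu m d"
  unfolding mu_def using phi_Ico_split by simp

lemma mu_0_1: "mu 0 1 = 1"
  using phi_eproj unfolding mu_def phi_Ico_def eproj_eq_fdelta by simp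

lemma mu_translate:
  assumes "a \<in> Gam lam" "c \<in> Gam lam" "d \<in> Gam lam" "c < d" "0 \<le> c" "d \<le> 1" "0 \<le> c + a" "d + a \<le> 1"
  shows "mu (c + a) (d + a) = mu c d"
proof -
  have "admissible lam (0, a) (c + a) (d + a)"
    unfolding admissible_def Gcarrier_def using assms by (auto intro: Gam_add)
  from phi_Ico_gunit_transport[OF this] show ?thesis
    unfolding mu_def kms_factor_def gact_ginv_translation by simp
qed

lemma mu_dilation: "exp (real k * \<beta>) * mu 0 (lam ^ k) = 1"
proof -
  have lk: "lam ^ k \<le> 1" "0 < lam ^ k" using lam_pos lam_less_1 by (simp_all add: power_le_one)
  have G: "lam ^ k \<in> Gam lam" using Gam_powi[OF lam_nonzero, of "int k"] by simp
  have "admissible lam (int k, 0) 0 (lam ^ k)"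
    unfolding admissible_def Gcarrier_def using lk G by (simp add: Gam_0)
  note transport = phi_Ico_gunit_transport[OF this]
  have "gact lam (ginv lam (int k, 0)) t = t / lam ^ k" for t
    using gact_ginv_eq[OF lam_pos, of "(int k, 0)" t] by simp
  then have "kms_factor (- int k) * phi_Ico gunit 0 (lam ^ k) = phi_Ico gunit 0 1"
    using transport lk lam_nonzero by simp
  moreover have "phi_Ico gunit 0 (lam ^ k) = of_real (mu 0 (lam ^ k))"
    using lk G by (intro phi_Ico_gunit_eq_mu admissible_gunit) (simp_all add: Gam_0)
  moreover have "phi_Ico gunit 0 1 = 1"
    using phi_eproj unfolding phi_Ico_def eproj_eq_fdelta .
  ultimately have "complex_of_real (exp (real k * \<beta>) * mu 0 (lam ^ k)) = 1"
    unfolding kms_factor_def by simp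
  then show ?thesis by (simp only: of_real_eq_1_iff)
qed

lemma mu_multiple:
  assumes "c \<in> Gam lam" "0 \<le> c" "c + real m * lam ^ k \<le> 1"
  shows "mu c (c + real m * lam ^ k) = real m * mu 0 (lam ^ k)"
  using assms(3)
proof (induction m)
  case (Suc m)
  let ?u = "lam ^ k" and ?e = "c + real m * lam ^ k"
  have u: "0 < ?u" "?u \<le> 1" using lam_pos lam_less_1 by (simp_all add: power_le_one)
  have uG: "?u \<in> Gam lam" using Gam_powi[OF lam_nonzero, of "int k"] by simp
  have eG: "?e \<in> Gam lam" "c + real (Suc m) * ?u \<in> Gam lam"
    using assms(1) uG by (simp_all only: Gam_add Gam_mult_nat)
  have le: "?e \<le> 1" using Suc.prems u by (simp add: algebra_simps)
  have "mu c (c + real (Suc m) * ?u) = mu c ?e + mu ?e (c + real (Suc m) * ?u)"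
    using assms eG Suc.prems u by (intro mu_split admissible_gunit) (auto simp: algebra_simps)
  also have "mu ?e (c + real (Suc m) * ?u) = mu (0 + ?e) (?u + ?e)"
    by (simp add: algebra_simps)
  also have "\<dots> = mu 0 ?u"
    using u eG uG Suc.prems assms(2) by (intro mu_translate) (auto simp: Gam_0 algebra_simps)
  finally show ?case using Suc.IH[OF le] by (simp add: algebra_simps)
qed (simp add: mu_empty)

lemma mu_approx:
  assumes "c \<in> Gam lam" "d \<in> Gam lam" "0 \<le> c" "c \<le> d" "d \<le> 1"
  obtains m :: nat
  where "real m * mu 0 (lam ^ k) \<le> mu c d" "mu c d \<le> (real m + 1) * mu 0 (lam ^ k)"
    "real m * lam ^ k \<le> d - c" "d - c < (real m + 1) * lam ^ k"
proof -
  let ?u = "lam ^ k"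
  have u: "0 < ?u" "?u \<le> 1" using lam_pos lam_less_1 by (simp_all add: power_le_one)
  have uG: "?u \<in> Gam lam" using Gam_powi[OF lam_nonzero, of "int k"] by simp
  define m where "m = nat \<lfloor>(d - c) / ?u\<rfloor>"
  have "real m = of_int \<lfloor>(d - c) / ?u\<rfloor>"
    unfolding m_def using assms u by simp
  then have "real m \<le> (d - c) / ?u" "(d - c) / ?u < real m + 1"
    by linarith+
  then have m1: "real m * ?u \<le> d - c" and m2: "d - c < (real m + 1) * ?u"
    using u by (simp_all add: field_simps)
  define e where "e = c + real m * ?u"
  have eG: "e \<in> Gam lam" unfolding e_def using assms(1) uG by (intro Gam_add Gam_mult_nat)
  have ed: "c \<le> e" "e \<le> d" "d - e < ?u" using m1 m2 u unfolding e_def by (simp_all add: algebra_simps)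
  have "mu c d = mu c e + mu e d"
    using assms ed eG by (intro mu_split admissible_gunit) auto
  also have "mu c e = real m * mu 0 ?u"
    unfolding e_def using assms ed by (intro mu_multiple) (auto simp: e_def)
  finally have split: "mu c d = real m * mu 0 ?u + mu e d" .
  have deG: "d - e \<in> Gam lam" using assms(2) eG by (rule Gam_diff)
  have "0 \<le> mu e d" using assms eG ed by (intro mu_nonneg admissible_gunit) auto
  moreover have "mu e d \<le> mu 0 ?u"
  proof (cases "e < d")
    case True
    have "mu e d = mu (0 + e) ((d - e) + e)" by simp
    also have "\<dots> = mu 0 (d - e)"
      using True assms eG deG ed u by (intro mu_translate) (auto simp: Gam_0)
    also have "mu 0 ?u = mu 0 (d - e) + mu (d - e) ?u"
      using u uG ed deG by (intro mu_split admissible_gunit) (auto simp: Gam_0)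
    moreover have "0 \<le> mu (d - e) ?u"
      using u uG deG ed by (intro mu_nonneg admissible_gunit) auto
    ultimately show ?thesis by simp
  next
    case False
    then show ?thesis using u uG by (simp add: mu_empty mu_nonneg admissible_gunit Gam_0)
  qed
  ultimately show ?thesis
    using that[of m] split m1 m2 by (simp add: algebra_simps)
qed

lemma beta_eq: "\<beta> = ln (1 / lam)"
proof -
  define E where "E = exp \<beta>"
  have E: "0 < E" unfolding E_def by simp
  have "1 - lam ^ k \<le> (E * lam) ^ k \<and> (E * lam) ^ k \<le> 1 + lam ^ k" for k
  proof -
    let ?u = "lam ^ k" and ?\<nu> = "mu 0 (lam ^ k)"
    have u: "0 < ?u" using lam_pos by simp
    have Ek: "E ^ k * ?\<nu> = 1" "0 < E ^ k"
      using mu_dilation[of k] E unfolding E_def exp_of_nat_mult by simp_all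
    obtain m :: nat where m: "real m * ?\<nu> \<le> 1" "1 \<le> (real m + 1) * ?\<nu>"
      "real m * ?u \<le> 1" "1 < (real m + 1) * ?u"
      using mu_approx[of 0 1 k] mu_0_1 by (auto simp: Gam_0 Gam_1)
    have "real m \<le> E ^ k" "E ^ k \<le> real m + 1"
      using m(1,2) Ek by (metis mult.left_commute mult.right_neutral mult_le_cancel_left_pos)+
    then have "real m * ?u \<le> E ^ k * ?u" "E ^ k * ?u \<le> (real m + 1) * ?u"
      using u by (intro mult_right_mono; simp)+
    moreover have "(E * lam) ^ k = E ^ k * ?u" by (simp add: power_mult_distrib)
    ultimately show ?thesis using m(3,4) unfolding distrib_right by linarith
  qed
  then have "E * lam = 1"
    using E lam_pos lam_less_1 by (intro power_bounds_imp_eq_1) simp_all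
  then have "E = 1 / lam" using lam_pos by (simp add: field_simps)
  then show ?thesis unfolding E_def by (metis ln_exp)
qed

lemma beta_pos: "0 < \<beta>"
  unfolding beta_eq using lam_pos lam_less_1 by simp

lemma mu_eq_length:
  assumes "c \<in> Gam lam" "d \<in> Gam lam" "0 \<le> c" "c \<le> d" "d \<le> 1"
  shows "mu c d = d - c"
proof -
  have scale: "mu 0 (lam ^ k) = lam ^ k" for k
  proof -
    have "(1 / lam) ^ k * mu 0 (lam ^ k) = 1"
      using mu_dilation[of k] lam_pos unfolding beta_eq exp_of_nat_mult by simp
    then show ?thesis using lam_pos by (simp add: field_simps power_one_over)
  qed
  have close: "\<bar>mu c d - (d - c)\<bar> \<le> lam ^ k" for k
  proof -
    obtain m :: nat where "real m * lam ^ k \<le> mu c d" "mu c d \<le> (real m + 1) * lam ^ k"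
      "real m * lam ^ k \<le> d - c" "d - c < (real m + 1) * lam ^ k"
      using mu_approx[OF assms, of k] unfolding scale by blast
    then show ?thesis by (simp add: algebra_simps abs_le_iff)
  qed
  show ?thesis
  proof (rule ccontr)
    assume "mu c d \<noteq> d - c"
    then obtain n where "lam ^ n < \<bar>mu c d - (d - c)\<bar>"
      using real_arch_pow_inv[OF _ lam_less_1, of "\<bar>mu c d - (d - c)\<bar>"] by auto
    with close[of n] show False by simp
  qed
qed

lemma phi_Ico_dilation_vanishes:
  assumes "admissible lam g c d" "fst g \<noteq> 0"
  shows "phi_Ico g c d = 0"
proof (cases "c < d")
  case True
  have g: "g \<in> Gcarrier lam" and cd: "c \<in> Gam lam" "d \<in> Gam lam"
    and b: "0 \<le> c" "d \<le> 1" "snd g \<le> c" "d \<le> lam powi fst g + snd g"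
    using assms True unfolding admissible_def by auto
  let ?gi = "gact lam (ginv lam g)"
  have p: "0 < lam powi fst g" using lam_pos by simp
  have gi01: "0 \<le> ?gi c" "?gi d \<le> 1"
    unfolding gact_ginv_eq[OF lam_pos] using b p by (simp_all add: field_simps)
  have G: "?gi c \<in> Gam lam" "?gi d \<in> Gam lam"
    using gact_Gam[OF lam_nonzero ginv_Gcarrier[OF lam_nonzero g]] cd by auto
  text \<open>A unit cut-off covering both [c,d) and g\<inverse>[c,d) leaves \<chi>_[c,d)\<delta>_g unchanged.\<close>
  have "kms_factor (fst g) * phi_Ico g c d = phi_Ico g c d"
  proof (rule kms_cutoff[OF assms(1) _ assms(1)])
    show "admissible lam gunit (min c (?gi c)) (max d (?gi d))"
      using G cd gi01 b by (intro admissible_gunit) (auto simp: min_def max_def)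
    fix t
    show "(indicator {min c (?gi c)..<max d (?gi d)} t :: complex) * indicator {c..<d} t
        = indicator {c..<d} t"
      by (auto simp: indicator_def)
    have "c \<le> t \<Longrightarrow> ?gi c \<le> ?gi t" "t < d \<Longrightarrow> ?gi t < ?gi d" using lam_pos by simp_all
    then show "(indicator {c..<d} t :: complex) * indicator {min c (?gi c)..<max d (?gi d)} (?gi t)
        = indicator {c..<d} t"
      by (auto simp: indicator_def min_le_iff_disj less_max_iff_disj)
  qed
  moreover have "kms_factor (fst g) \<noteq> 1"
    using assms(2) beta_pos unfolding kms_factor_def by simp
  ultimately show ?thesis by (metis mult_cancel_right1)
qed (simp add: phi_Ico_empty)

lemma phi_Ico_translation_shift:
  assumes adm: "admissible lam (0, a) c d"
    and sub: "c' \<in> Gam lam" "d' \<in> Gam lam" "c \<le> c'" "c' < d'" "d' \<le> d"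
  shows "phi_Ico (0, a) c' d' = phi_Ico (0, a) (max c (c' + a)) (min d (d' + a))"
proof -
  have "kms_factor (fst (0::int, a)) * phi_Ico (0, a) c' d'
      = phi_Ico (0, a) (max c (c' + a)) (min d (d' + a))"
  proof (rule kms_cutoff[OF adm])
    have "0 \<le> c" "d \<le> 1" using adm sub unfolding admissible_def by auto
    with sub show "admissible lam gunit c' d'" by (intro admissible_gunit) auto
    show "admissible lam (0, a) c' d'"
      using adm sub unfolding admissible_def by auto
  qed (use sub in \<open>auto simp: indicator_def gact_ginv_translation\<close>)
  then show ?thesis unfolding kms_factor_def by simp
qed

lemma phi_Ico_translation_vanishes:
  assumes adm: "admissible lam (0, a) c d" and "a \<noteq> 0"
  shows "phi_Ico (0, a) c d = 0"
proof -
  have aG: "a \<in> Gam lam" and cd: "c \<in> Gam lam" "d \<in> Gam lam"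
    using adm unfolding admissible_def Gcarrier_def by auto
  consider "0 < a" | "a < 0" using \<open>a \<noteq> 0\<close> by linarith
  then show ?thesis
  proof cases
    case pos: 1
    show ?thesis
    proof (rule shift_invariant_vanishes[OF pos cd(1)])
      show "phi_Ico (0, a) (c' + a) d = phi_Ico (0, a) c' d" if "c' \<in> Gam lam" "c \<le> c'" for c'
      proof (cases "c' < d")
        case True
        then show ?thesis
          using phi_Ico_translation_shift[OF adm that(1) cd(2) that(2) True] pos that by simp
      qed (use pos in \<open>simp add: phi_Ico_empty\<close>)
    qed (auto intro: Gam_add aG phi_Ico_empty)
  next
    case neg: 2
    have "phi_Ico (0, a) c (- (- d)) = 0"
    proof (rule shift_invariant_vanishes[where f = "\<lambda>y. phi_Ico (0, a) c (- y)" and c = "- d"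
          and a = "- a" and A = "uminus ` Gam lam" and d = "- c"])
      show "0 < - a" "- d \<in> uminus ` Gam lam" using neg cd by auto
      show "y + - a \<in> uminus ` Gam lam" if "y \<in> uminus ` Gam lam" for y
      proof -
        from that obtain z where "z \<in> Gam lam" "y = - z" by auto
        then show ?thesis using aG by (intro image_eqI[of _ uminus "z + a"]) (auto intro: Gam_add)
      qed
      show "phi_Ico (0, a) c (- x) = 0" if "- c \<le> x" for x
        using that by (simp add: phi_Ico_empty)
      fix y assume "y \<in> uminus ` Gam lam" "- d \<le> y"
      then obtain d' where d': "y = - d'" "d' \<in> Gam lam" "d' \<le> d" by auto
      show "phi_Ico (0, a) c (- (y + - a)) = phi_Ico (0, a) c (- y)"
      proof (cases "c < d'")
        case True
        then show ?thesis
          using phi_Ico_translation_shift[OF adm cd(1) d'(2) order_refl True d'(3)] neg d' by (simp add: add.commute)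
      qed (use neg d' in \<open>simp add: phi_Ico_empty\<close>)
    qed
    then show ?thesis by simp
  qed
qed

lemma phi_Ico_eq_psi:
  assumes "admissible lam g c d"
  shows "\<phi> (fdelta (indicator {c..<d}) g) = psi (fdelta (indicator {c..<d}) g)"
proof (cases "g = gunit")
  case False
  have "phi_Ico g c d = 0"
  proof (cases "fst g = 0")
    case True
    with False obtain a where "g = (0, a)" "a \<noteq> 0" unfolding gunit_def by (cases g) auto
    then show ?thesis using phi_Ico_translation_vanishes assms by blast
  qed (use phi_Ico_dilation_vanishes assms in blast)
  then show ?thesis unfolding phi_Ico_def psi_def fdelta_gunit using False by simp
next
  case True
  have psi: "psi (fdelta (indicator {c..<d}) g) = of_real (max 0 (d - c))"
    unfolding psi_def fdelta_gunit using True integral_indicator_Ico by simp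
  show ?thesis
  proof (cases "c < d")
    case True
    then have "mu c d = d - c"
      using assms unfolding admissible_def by (intro mu_eq_length) auto
    then show ?thesis
      using phi_Ico_gunit_eq_mu assms \<open>g = gunit\<close> True psi unfolding phi_Ico_def by simp
  next
    case False
    then have "phi_Ico g c d = 0" by (simp add: phi_Ico_empty)
    with False psi show ?thesis unfolding phi_Ico_def by simp
  qed
qed

end

theorem mainTheorem17:
  fixes lam :: real
  assumes "0 < lam" and "lam < 1"
  shows "(\<forall>x. Qalg lam x \<longrightarrow>
            (\<forall>t::real. gauge_ext (of_real t) x = gauge (exp (\<i> * of_real t)) x)
          \<and> (\<forall>g s. (\<lambda>z. gauge_ext z x g s) holomorphic_on UNIV))
       \<and> is_KMS lam (ln (1 / lam)) psi
       \<and> (\<forall>\<beta> \<phi>. is_KMS lam \<beta> \<phi> \<longrightarrow> (\<forall>x. Qalg lam x \<longrightarrow> \<phi> x = psi x))"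
proof (intro conjI allI impI)
  fix x :: elem and t :: real
  show "gauge_ext (of_real t) x = gauge (exp (\<i> * of_real t)) x"
    unfolding gauge_ext_def gauge_def by (auto simp: fun_eq_iff exp_power_int mult_ac)
next
  fix x :: elem and g s
  show "(\<lambda>z. gauge_ext z x g s) holomorphic_on UNIV"
    unfolding gauge_ext_def by (intro holomorphic_intros)
next
  show "is_KMS lam (ln (1 / lam)) psi"
    using is_KMS_psi assms(1) .
next
  fix \<beta> \<phi> x
  assume "is_KMS lam \<beta> \<phi>" "Qalg lam x"
  then interpret kms_state lam \<beta> \<phi>
    using assms by unfold_locales
  show "\<phi> x = psi x"
    by (rule is_state_eqI[OF lam_pos state is_state_psi[OF lam_pos] \<open>Qalg lam x\<close> phi_Ico_eq_psi])
qed

end
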